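(* Let $0<q<1$ and let $A_q(t)=\sum_{n=0}^{\infty}A_{n,q}\dfrac{t^n}{[n]_q!}$ be a power series, analytic at $t=0$, with $A_q(0)=A_{0,q}\neq 0$. Define the $q$-Appell polynomials $A_{n,q}(x)$ by \[ A_q(t)\,e_q(tx)=\sum_{n=0}^{\infty}A_{n,q}(x)\frac{t^n}{[n]_q!}, \] and define the numbers $\alpha_n$ by the expansion \[ t\,\frac{D_{q,t}A_q(t)}{A_q(qt)}=\sum_{n=0}^{\infty}\alpha_n\frac{t^n}{[n]_q!}. \] Then for every integer $n\ge 1$, \begin{align*} A_{n,q}(qx)&=\frac{1}{[n]_q}\sum_{k=0}^{n}\begin{bmatrix}n\\k\end{bmatrix}_q\alpha_{n-k}\,q^{k}A_{k,q}(x)+x\,q^{n}A_{n-1,q}(x)\\ &=\frac{1}{[n]_q}\alpha_0 q^{n}A_{n,q}(x)+q^{n}\left(x+\alpha_1q^{-1}\right)A_{n-1,q}(x)+\frac{1}{[n]_q}\sum_{k=0}^{n-2}\begin{bmatrix}n\\k\end{bmatrix}_q\alpha_{n-k}\,q^{k}A_{k,q}(x). \end{align*}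
   Context: $[n]_q=\frac{1-q^n}{1-q}$, $[0]_q!=1$, $[n]_q!=[n]_q[n-1]_q\cdots[1]_q$, and $\begin{bmatrix}n\\k\end{bmatrix}_q=\frac{[n]_q!}{[k]_q![n-k]_q!}$. The $q$-exponential is $e_q(t)=\sum_{n=0}^\infty \frac{t^n}{[n]_q!}$. The $q$-derivative is $D_{q,x}f(x)=\frac{f(qx)-f(x)}{(q-1)x}$ (for $x\neq0$; for power series/polynomials it acts by $D_{q,x}x^n=[n]_qx^{n-1}$), and $D_{q,t}$ is the same operator in the variable $t$. *)

theory Defs
  imports "HOL-Analysis.Analysis" "HOL-Computational_Algebra.Formal_Power_Series"
begin

definition qint :: "real \<Rightarrow> nat \<Rightarrow> real" where
  "qint q n = (1 - q ^ n) / (1 - q)"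

definition qfact :: "real \<Rightarrow> nat \<Rightarrow> real" where
  "qfact q n = (\<Prod>i=1..n. qint q i)"

definition qbinom :: "real \<Rightarrow> nat \<Rightarrow> nat \<Rightarrow> real" where
  "qbinom q n k = qfact q n / (qfact q k * qfact q (n - k))"

definition fps_qderiv :: "real \<Rightarrow> real fps \<Rightarrow> real fps" where
  "fps_qderiv q f = Abs_fps (\<lambda>n. qint q (Suc n) * fps_nth f (Suc n))"

definition fps_qscale :: "real \<Rightarrow> real fps \<Rightarrow> real fps" where
  "fps_qscale q f = Abs_fps (\<lambda>n. q ^ n * fps_nth f n)"

definition qAseries :: "real \<Rightarrow> (nat \<Rightarrow> real) \<Rightarrow> real fps" where
  "qAseries q a = Abs_fps (\<lambda>n. a n / qfact q n)"

definition qexp_fps :: "real \<Rightarrow> real \<Rightarrow> real fps" where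
  "qexp_fps q x = Abs_fps (\<lambda>n. x ^ n / qfact q n)"

definition qAppell :: "real \<Rightarrow> (nat \<Rightarrow> real) \<Rightarrow> nat \<Rightarrow> real \<Rightarrow> real" where
  "qAppell q a n x = qfact q n * fps_nth (qAseries q a * qexp_fps q x) n"

definition qalpha :: "real \<Rightarrow> (nat \<Rightarrow> real) \<Rightarrow> nat \<Rightarrow> real" where
  "qalpha q a n = qfact q n *
     fps_nth (fps_X * fps_qderiv q (qAseries q a) / fps_qscale q (qAseries q a)) n"

end

theory Submission
  imports Defs
begin

unbundle no vec_syntax
notation fps_nth (infixl \<open>$\<close> 75)

text \<open>
Write \<open>\<theta> = t D\<^sub>q\<close>, which acts on coefficients by \<open>\<theta> t\<^sup>n = [n]\<^sub>q t\<^sup>n\<close> and obeys the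
q-Leibniz rule \<open>\<theta>(fg) = \<theta>f \<cdot> g + f(qt) \<cdot> \<theta>g\<close>. Since \<open>\<theta> e\<^sub>q(tx) = x t e\<^sub>q(tx)\<close> and, by
definition of the \<open>\<alpha>\<^sub>n\<close>, \<open>\<theta> A\<^sub>q(t) = \<alpha>(t) A\<^sub>q(qt)\<close>, we get
\<open>\<theta>(A\<^sub>q(t) e\<^sub>q(qxt)) = (\<alpha>(t) + qxt) \<cdot> A\<^sub>q(qt) e\<^sub>q(qxt)\<close>, and the last factor is the generating
function of the \<open>A\<^sub>k\<^sub>,\<^sub>q(x)\<close> evaluated at \<open>qt\<close>. Comparing coefficients of \<open>t\<^sup>n\<close> gives the
first identity; the second only splits off the terms \<open>k = n\<close> and \<open>k = n - 1\<close>.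
Everything happens in formal power series.
\<close>

lemma qint_0 [simp]: "qint q 0 = 0"
  by (simp add: qint_def)

lemma qint_eq_sum_power: "q \<noteq> 1 \<Longrightarrow> qint q n = (\<Sum>i<n. q ^ i)"
  by (simp add: qint_def geometric_sum divide_simps) argo

lemma qint_pos:
  assumes "0 < q" "q \<noteq> 1" "0 < n"
  shows "0 < qint q n"
proof -
  have "(\<Sum>i<n. q ^ i) \<ge> q ^ 0"
    using \<open>0 < q\<close> \<open>0 < n\<close> by (intro member_le_sum) auto
  then show ?thesis
    by (simp add: qint_eq_sum_power[OF assms(2)])
qed

lemma qint_add:
  assumes "q \<noteq> 1" "i \<le> n"
  shows "qint q n = qint q i + q ^ i * qint q (n - i)"
proof -
  have "q ^ n = q ^ i * q ^ (n - i)"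
    using assms(2) by (simp flip: power_add)
  then show ?thesis
    using assms(1) by (simp add: qint_def field_simps)
qed

lemma qfact_0 [simp]: "qfact q 0 = 1"
  by (simp add: qfact_def)

lemma qfact_Suc: "qfact q (Suc n) = qfact q n * qint q (Suc n)"
  by (simp add: qfact_def)

lemma qfact_pos: "0 < q \<Longrightarrow> q \<noteq> 1 \<Longrightarrow> 0 < qfact q n"
  unfolding qfact_def by (intro prod_pos) (auto intro: qint_pos)

lemma qbinom_self: "0 < q \<Longrightarrow> q \<noteq> 1 \<Longrightarrow> qbinom q n n = 1"
  using qfact_pos[of q n] by (simp add: qbinom_def)

lemma qbinom_Suc_self:
  assumes "0 < q" "q \<noteq> 1"
  shows "qbinom q (Suc n) n = qint q (Suc n)"
proof -
  have "qfact q 1 = 1"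
    using assms(2) by (simp add: qfact_def qint_def)
  then show ?thesis
    using qfact_pos[OF assms, of n] by (simp add: qbinom_def qfact_Suc)
qed

lemma qbinom_convolution:
  "qfact q n * (Abs_fps (\<lambda>k. u k / qfact q k) * Abs_fps (\<lambda>k. v k / qfact q k)) $ n
     = (\<Sum>k=0..n. qbinom q n k * u k * v (n - k))"
  unfolding fps_mult_nth sum_distrib_left
  by (rule sum.cong) (simp_all add: qbinom_def)

definition fps_qtheta :: "real \<Rightarrow> real fps \<Rightarrow> real fps" where
  "fps_qtheta q f = Abs_fps (\<lambda>n. qint q n * f $ n)"

lemma fps_X_mult_qderiv: "fps_X * fps_qderiv q f = fps_qtheta q f"
  by (rule fps_ext) (auto simp: fps_qtheta_def fps_qderiv_def gr0_conv_Suc)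

lemma fps_qscale_mult: "fps_qscale q (f * g) = fps_qscale q f * fps_qscale q g"
proof (rule fps_ext)
  fix n
  have "fps_qscale q (f * g) $ n = (\<Sum>i=0..n. (q ^ i * f $ i) * (q ^ (n - i) * g $ (n - i)))"
    unfolding fps_qscale_def fps_mult_nth sum_distrib_left
    by (simp, rule sum.cong) (auto simp: algebra_simps simp flip: power_add)
  then show "fps_qscale q (f * g) $ n = (fps_qscale q f * fps_qscale q g) $ n"
    by (simp add: fps_qscale_def fps_mult_nth)
qed

lemma fps_qtheta_mult:
  assumes "q \<noteq> 1"
  shows "fps_qtheta q (f * g) = fps_qtheta q f * g + fps_qscale q f * fps_qtheta q g"
proof (rule fps_ext)
  fix n
  have "fps_qtheta q (f * g) $ n = (\<Sum>i=0..n. qint q n * (f $ i * g $ (n - i)))"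
    by (simp add: fps_qtheta_def fps_mult_nth sum_distrib_left)
  also have "\<dots> = (\<Sum>i=0..n. (qint q i * f $ i) * g $ (n - i)
                     + (q ^ i * f $ i) * (qint q (n - i) * g $ (n - i)))"
    by (rule sum.cong) (auto simp: qint_add[OF assms] algebra_simps)
  also have "\<dots> = (fps_qtheta q f * g + fps_qscale q f * fps_qtheta q g) $ n"
    by (simp add: fps_qtheta_def fps_qscale_def fps_mult_nth sum.distrib)
  finally show "fps_qtheta q (f * g) $ n = (fps_qtheta q f * g + fps_qscale q f * fps_qtheta q g) $ n" .
qed

lemma fps_qscale_qexp: "fps_qscale q (qexp_fps q x) = qexp_fps q (q * x)"
  by (rule fps_ext) (simp add: fps_qscale_def qexp_fps_def power_mult_distrib)

lemma fps_qtheta_qexp: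
  assumes "0 < q" "q \<noteq> 1"
  shows "fps_qtheta q (qexp_fps q x) = fps_const x * fps_X * qexp_fps q x"
proof (rule fps_ext)
  fix n
  show "fps_qtheta q (qexp_fps q x) $ n = (fps_const x * fps_X * qexp_fps q x) $ n"
  proof (cases n)
    case (Suc m)
    have "0 < qint q (Suc m)" "0 < qfact q m"
      using qint_pos qfact_pos assms by auto
    then show ?thesis
      using Suc by (simp add: fps_qtheta_def qexp_fps_def qfact_Suc field_simps)
  qed (simp add: fps_qtheta_def)
qed

lemma fps_qtheta_eq_mult_qscale:
  assumes "f $ 0 \<noteq> 0"
  shows "fps_qtheta q f = fps_X * fps_qderiv q f / fps_qscale q f * fps_qscale q f"
proof -
  have "fps_qscale q f $ 0 \<noteq> 0"
    using assms by (simp add: fps_qscale_def)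
  then show ?thesis
    by (simp add: fps_divide_unit inverse_mult_eq_1 mult.assoc fps_X_mult_qderiv)
qed

lemma fps_qtheta_qAppell_gf:
  assumes "0 < q" "q \<noteq> 1" "a 0 \<noteq> 0"
  defines "A \<equiv> qAseries q a"
  shows "fps_qtheta q (A * qexp_fps q (q * x))
           = (fps_X * fps_qderiv q A / fps_qscale q A + fps_const (q * x) * fps_X)
             * fps_qscale q (A * qexp_fps q x)"
proof -
  define \<alpha> where "\<alpha> = fps_X * fps_qderiv q A / fps_qscale q A"
  have "A $ 0 \<noteq> 0"
    using assms(3) by (simp add: A_def qAseries_def)
  then have "fps_qtheta q A = \<alpha> * fps_qscale q A"
    unfolding \<alpha>_def by (rule fps_qtheta_eq_mult_qscale)
  then show ?thesis
    unfolding fps_qtheta_mult[OF assms(2)] fps_qtheta_qexp[OF assms(1,2)]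
      fps_qscale_mult fps_qscale_qexp \<alpha>_def[symmetric]
    by (simp add: algebra_simps)
qed

lemma qAppell_q_mult_recurrence:
  assumes "0 < q" "q \<noteq> 1" "a 0 \<noteq> 0" "n = Suc m"
  shows "qAppell q a n (q * x)
           = 1 / qint q n * (\<Sum>k=0..n. qbinom q n k * qalpha q a (n - k) * q ^ k * qAppell q a k x)
             + x * q ^ n * qAppell q a m x"
proof -
  define A where "A = qAseries q a"
  define \<alpha> where "\<alpha> = fps_X * fps_qderiv q A / fps_qscale q A"
  define Q where "Q = fps_qscale q (A * qexp_fps q x)"
  have qfact_nz: "qfact q k \<noteq> 0" for k
    using qfact_pos[OF assms(1,2), of k] by simp
  have qint_n: "0 < qint q n"
    using qint_pos[OF assms(1,2)] assms(4) by simp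
  have \<alpha>_egf: "\<alpha> = Abs_fps (\<lambda>k. qalpha q a k / qfact q k)"
    using qfact_nz by (intro fps_ext) (simp add: qalpha_def \<alpha>_def A_def)
  have Q_egf: "Q = Abs_fps (\<lambda>k. q ^ k * qAppell q a k x / qfact q k)"
    using qfact_nz by (intro fps_ext) (simp add: qAppell_def Q_def A_def fps_qscale_def)
  have "fps_qtheta q (A * qexp_fps q (q * x)) $ n = ((\<alpha> + fps_const (q * x) * fps_X) * Q) $ n"
    unfolding A_def \<alpha>_def Q_def fps_qtheta_qAppell_gf[where a = a and x = x, OF assms(1-3)] ..
  then have coeff: "qint q n * (A * qexp_fps q (q * x)) $ n = (Q * \<alpha>) $ n + q * x * Q $ m"
    using assms(4) by (simp add: fps_qtheta_def distrib_right mult.assoc mult.commute[of \<alpha> Q])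
  have "qAppell q a n (q * x) = qfact q m * (qint q n * (A * qexp_fps q (q * x)) $ n)"
    by (simp add: qAppell_def A_def assms(4) qfact_Suc)
  also have "\<dots> = 1 / qint q n * (qfact q n * (Q * \<alpha>) $ n)
                   + x * q ^ n * (qfact q m * (A * qexp_fps q x) $ m)"
    unfolding coeff using qint_n by (simp add: assms(4) qfact_Suc Q_def fps_qscale_def field_simps)
  also have "qfact q n * (Q * \<alpha>) $ n
               = (\<Sum>k=0..n. qbinom q n k * qalpha q a (n - k) * q ^ k * qAppell q a k x)"
    unfolding Q_egf \<alpha>_egf qbinom_convolution by (simp add: mult_ac)
  finally show ?thesis
    by (simp add: qAppell_def A_def)
qed

theorem theorem1:
  fixes q x :: real and a :: "nat \<Rightarrow> real" and n :: nat
  assumes "0 < q" "q < 1"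
    and "fps_conv_radius (qAseries q a) > 0"
    and "a 0 \<noteq> 0"
    and "1 \<le> n"
  shows "(qAppell q a n (q * x)
           = 1 / qint q n * (\<Sum>k=0..n. qbinom q n k * qalpha q a (n - k) * q ^ k * qAppell q a k x)
             + x * q ^ n * qAppell q a (n - 1) x)
     \<and> (1 / qint q n * (\<Sum>k=0..n. qbinom q n k * qalpha q a (n - k) * q ^ k * qAppell q a k x)
             + x * q ^ n * qAppell q a (n - 1) x
         = 1 / qint q n * qalpha q a 0 * q ^ n * qAppell q a n x
           + q ^ n * (x + qalpha q a 1 / q) * qAppell q a (n - 1) x
           + 1 / qint q n * (\<Sum>k<n - 1. qbinom q n k * qalpha q a (n - k) * q ^ k * qAppell q a k x))"
proof -
  have q: "0 < q" "q \<noteq> 1"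
    using assms(1,2) by auto
  obtain m where n: "n = Suc m"
    using assms(5) by (cases n) auto
  have "(\<Sum>k=0..n. f k) = (\<Sum>k<m. f k) + f m + f n" for f :: "nat \<Rightarrow> real"
    by (simp add: n atLeast0AtMost flip: lessThan_Suc_atMost)
  moreover have "0 < qint q n"
    using qint_pos[OF q] n by simp
  ultimately show ?thesis
    using qAppell_q_mult_recurrence[where a = a and x = x, OF q assms(4) n]
      qbinom_self[OF q] qbinom_Suc_self[OF q] q
    by (simp add: n field_simps)
qed

end
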